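(* Let $n\geq 7$ and $p\geq 2$. Then $\rho(\mathbf{S}_{p}(U_{4}))<\rho(\mathbf{S}_{p}(U_{3}))$.
   Context: All graphs are simple and connected; $d_i$ is the degree of $v_i$. The $p$-Sombor matrix $\mathbf{S}_{p}(G)$ has $(i,j)$-entry $(d_i^{p}+d_j^{p})^{1/p}$ if $v_iv_j\in E(G)$ and $0$ otherwise; $\rho(\mathbf{S}_{p}(G))$ is its largest eigenvalue. $U_3$ is the unicyclic graph of order $n$ consisting of a $4$-cycle $v_1v_2v_3v_4$ with $n-4$ pendant vertices attached to $v_4$. $U_4$ is the unicyclic graph of order $n$ consisting of a triangle $xyz$, with $n-5$ pendant vertices attached to $x$ and $2$ pendant vertices attached to $y$. *)

theory Defs
  imports "Jordan_Normal_Form.Char_Poly"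
begin

text \<open>Simple graphs on vertex set {0..<n} given by a symmetric irreflexive edge predicate.\<close>

definition deg :: "nat \<Rightarrow> (nat \<Rightarrow> nat \<Rightarrow> bool) \<Rightarrow> nat \<Rightarrow> nat" where
  "deg n E i = card {j. j < n \<and> E i j}"

definition sombor_mat :: "real \<Rightarrow> nat \<Rightarrow> (nat \<Rightarrow> nat \<Rightarrow> bool) \<Rightarrow> real mat" where
  "sombor_mat p n E = mat n n (\<lambda>(i,j). if E i j
      then (real (deg n E i) powr p + real (deg n E j) powr p) powr (1 / p) else 0)"

definition largest_eig :: "real mat \<Rightarrow> real" where
  "largest_eig A = Max {k. eigenvalue A k}"

text \<open>U3: 4-cycle v0 v1 v2 v3 (paper's v1..v4) with pendants 4..n-1 attached to v3 (paper's v4).\<close>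
definition U3_edge :: "nat \<Rightarrow> nat \<Rightarrow> nat \<Rightarrow> bool" where
  "U3_edge n i j = (i < n \<and> j < n \<and>
     ({i,j} = {0,1} \<or> {i,j} = {1,2} \<or> {i,j} = {2,3} \<or> {i,j} = {3,0} \<or>
      (i = 3 \<and> j \<ge> 4) \<or> (j = 3 \<and> i \<ge> 4)))"

text \<open>U4: triangle x=0, y=1, z=2; pendants 3,4 attached to y; pendants 5..n-1 (n-5 of them) attached to x.\<close>
definition U4_edge :: "nat \<Rightarrow> nat \<Rightarrow> nat \<Rightarrow> bool" where
  "U4_edge n i j = (i < n \<and> j < n \<and>
     ({i,j} = {0,1} \<or> {i,j} = {1,2} \<or> {i,j} = {2,0} \<or>
      {i,j} = {1,3} \<or> {i,j} = {1,4} \<or>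
      (i = 0 \<and> j \<ge> 5) \<or> (j = 0 \<and> i \<ge> 5)))"

end

theory Submission
  imports Defs
begin

text \<open>The spectral radius of U4 is bounded above by Collatz--Wielandt, using an explicit positive
  test vector w with S w \<le> \<mu> w. For U3 an explicit eigenvector exists for every root \<lambda> > 0 of a
  quadratic equation in \<lambda>^2, so a \<mu> at which that quadratic is negative lies below an eigenvalue
  of U3. Both bounds only need numerical bounds on the p-Sombor weights (x^p + y^p)^(1/p), which
  decrease in p and lie between max x y and sqrt (x^2 + y^2) for p \<ge> 2. For n \<ge> 9 a
  closed-form \<mu> separates the radii, n = 8 needs one numerical \<mu>, and for n = 7 the range of p
  is split into five intervals.\<close>

section \<open>The p-Sombor weight\<close>

definition sombor_weight :: "real \<Rightarrow> real \<Rightarrow> real \<Rightarrow> real" where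
  "sombor_weight p x y = (x powr p + y powr p) powr (1 / p)"

lemma sombor_weight_commute: "sombor_weight p x y = sombor_weight p y x"
  unfolding sombor_weight_def by (simp add: add.commute)

lemma sombor_weight_nonneg: "0 \<le> sombor_weight p x y"
  unfolding sombor_weight_def by simp

lemma sombor_weight_ge_left:
  assumes "0 \<le> x" "0 \<le> y" "0 < p"
  shows "x \<le> sombor_weight p x y"
proof -
  have "x = (x powr p) powr (1 / p)"
    using assms by (simp add: powr_powr)
  also have "\<dots> \<le> sombor_weight p x y"
    unfolding sombor_weight_def by (rule powr_mono2) (use assms in auto)
  finally show ?thesis .
qed

lemma sombor_weight_diag:
  assumes "0 \<le> x" "0 < p"
  shows "sombor_weight p x x = x * sombor_weight p 1 1"
proof -
  have "sombor_weight p x x = (2 * x powr p) powr (1 / p)"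
    unfolding sombor_weight_def by simp
  also have "\<dots> = x * 2 powr (1 / p)"
    using assms by (simp add: powr_mult powr_powr)
  finally show ?thesis
    by (simp add: sombor_weight_def)
qed

lemma sombor_weight_two: "0 \<le> x \<Longrightarrow> 0 \<le> y \<Longrightarrow> sombor_weight 2 x y = sqrt (x\<^sup>2 + y\<^sup>2)"
  unfolding sombor_weight_def by (simp add: powr_half_sqrt)

lemma sombor_weight_eq_scaled:
  assumes "0 < x" "0 \<le> y" "0 < p"
  shows "sombor_weight p x y = x * (1 + (y / x) powr p) powr (1 / p)"
proof -
  have "x powr p + y powr p = x powr p * (1 + (y / x) powr p)"
    using assms by (simp add: powr_divide field_simps)
  then show ?thesis
    using assms by (simp add: sombor_weight_def powr_mult powr_powr)
qed

lemma sombor_weight_antimono: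
  assumes "0 < x" "0 < y" "0 < p" "p \<le> q"
  shows "sombor_weight q x y \<le> sombor_weight p x y"
proof -
  have ordered: "sombor_weight q x y \<le> sombor_weight p x y" if "0 < y" "y \<le> x" for x y
  proof -
    have r: "0 < y / x" "y / x \<le> 1"
      using that by auto
    have "(1 + (y / x) powr q) powr (1 / q) \<le> (1 + (y / x) powr p) powr (1 / q)"
      using powr_mono'[OF assms(4)] r by (intro powr_mono2) (use assms in auto)
    also have "\<dots> \<le> (1 + (y / x) powr p) powr (1 / p)"
      by (rule powr_mono) (use assms r in \<open>auto simp: frac_le\<close>)
    finally show ?thesis
      using that assms by (simp add: sombor_weight_eq_scaled)
  qed
  show ?thesis
    using ordered[of y x] ordered[of x y] assms by (cases "y \<le> x") (auto simp: sombor_weight_commute)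
qed

lemma sombor_weight_le_sqrt:
  assumes "2 \<le> p" "0 < x" "0 < y"
  shows "sombor_weight p x y \<le> sqrt (x\<^sup>2 + y\<^sup>2)"
  using sombor_weight_antimono[of x y 2 p] sombor_weight_two[of x y] assms by simp

lemma sombor_weight_power2_le:
  assumes "2 \<le> p" "0 < x" "0 < y"
  shows "(sombor_weight p x y)\<^sup>2 \<le> x\<^sup>2 + y\<^sup>2"
proof -
  have "(sombor_weight p x y)\<^sup>2 \<le> (sqrt (x\<^sup>2 + y\<^sup>2))\<^sup>2"
    using sombor_weight_le_sqrt[OF assms] sombor_weight_nonneg by (intro power_mono) auto
  then show ?thesis
    by simp
qed

lemma sombor_weight_le_of_sq:
  "2 \<le> p \<Longrightarrow> 0 < x \<Longrightarrow> 0 < y \<Longrightarrow> 0 \<le> r \<Longrightarrow> x\<^sup>2 + y\<^sup>2 \<le> r\<^sup>2 \<Longrightarrow>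
    sombor_weight p x y \<le> r"
  using sombor_weight_le_sqrt[of p x y] real_sqrt_le_mono[of "x\<^sup>2 + y\<^sup>2" "r\<^sup>2"] by simp

lemma sombor_weight_le_of_powr:
  assumes "0 < p" "0 < r" "x powr p + y powr p \<le> r powr p"
  shows "sombor_weight p x y \<le> r"
proof -
  have "sombor_weight p x y \<le> (r powr p) powr (1 / p)"
    unfolding sombor_weight_def using assms by (intro powr_mono2) auto
  then show ?thesis
    using assms by (simp add: powr_powr)
qed

lemma sombor_weight_ge_of_powr:
  assumes "0 < p" "0 < r" "r powr p \<le> x powr p + y powr p"
  shows "r \<le> sombor_weight p x y"
proof -
  have "(r powr p) powr (1 / p) \<le> sombor_weight p x y"
    unfolding sombor_weight_def using assms by (intro powr_mono2) auto
  then show ?thesis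
    using assms by (simp add: powr_powr)
qed

lemma sombor_weight_numeral_le:
  "0 < x \<Longrightarrow> 0 < y \<Longrightarrow> 0 < r \<Longrightarrow> x ^ numeral k + y ^ numeral k \<le> r ^ numeral k \<Longrightarrow>
    sombor_weight (numeral k) x y \<le> r"
  by (rule sombor_weight_le_of_powr) auto

lemma sombor_weight_numeral_ge:
  "0 < x \<Longrightarrow> 0 < y \<Longrightarrow> 0 < r \<Longrightarrow> r ^ numeral k \<le> x ^ numeral k + y ^ numeral k \<Longrightarrow>
    r \<le> sombor_weight (numeral k) x y"
  by (rule sombor_weight_ge_of_powr) auto

lemma powr_numeral_divide_power:
  fixes x :: real
  assumes "0 < x"
  shows "(x powr (numeral k / numeral d)) ^ numeral d = x ^ numeral k"
proof -
  have "(x powr (numeral k / numeral d)) ^ numeral d = x powr (numeral d * (numeral k / numeral d))"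
    using assms by (subst powr_power) auto
  also have "numeral d * (numeral k / numeral d) = (numeral k :: real)"
    by (simp add: mult.commute)
  finally show ?thesis
    using assms by simp
qed

lemma powr_numeral_divide_le:
  fixes x s :: real
  assumes "0 < x" "0 \<le> s" "x ^ numeral k \<le> s ^ numeral d"
  shows "x powr (numeral k / numeral d) \<le> s"
  using power_mono_iff[of "x powr (numeral k / numeral d)" s "numeral d"] assms
  by (simp add: powr_numeral_divide_power)

lemma le_powr_numeral_divide:
  fixes x s :: real
  assumes "0 < x" "0 \<le> s" "s ^ numeral d \<le> x ^ numeral k"
  shows "s \<le> x powr (numeral k / numeral d)"
  using power_mono_iff[of s "x powr (numeral k / numeral d)" "numeral d"] assms
  by (simp add: powr_numeral_divide_power)

text \<open>At a rational exponent k/d the powers are irrational; X and Y are rational bounds for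
  x^(k/d) and y^(k/d), which turns the claim into inequalities between integer powers of rationals.\<close>

lemma sombor_weight_numeral_divide_le:
  assumes "0 < x" "0 < y" "0 < r" "0 \<le> X" "0 \<le> Y"
    and "x ^ numeral k \<le> X ^ numeral d" "y ^ numeral k \<le> Y ^ numeral d"
    and "(X + Y) ^ numeral d \<le> r ^ numeral k"
  shows "sombor_weight (numeral k / numeral d) x y \<le> r"
proof (rule sombor_weight_le_of_powr)
  have "x powr (numeral k / numeral d) \<le> X" "y powr (numeral k / numeral d) \<le> Y"
    using assms by (auto intro: powr_numeral_divide_le)
  moreover have "X + Y \<le> r powr (numeral k / numeral d)"
    using assms by (intro le_powr_numeral_divide) auto
  ultimately show "x powr (numeral k / numeral d) + y powr (numeral k / numeral d)
      \<le> r powr (numeral k / numeral d)"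
    by linarith
qed (use assms in auto)

lemma sombor_weight_numeral_divide_ge:
  assumes "0 < x" "0 < y" "0 < r" "0 \<le> X" "0 \<le> Y"
    and "X ^ numeral d \<le> x ^ numeral k" "Y ^ numeral d \<le> y ^ numeral k"
    and "r ^ numeral k \<le> (X + Y) ^ numeral d"
  shows "r \<le> sombor_weight (numeral k / numeral d) x y"
proof (rule sombor_weight_ge_of_powr)
  have "X \<le> x powr (numeral k / numeral d)" "Y \<le> y powr (numeral k / numeral d)"
    using assms by (auto intro: le_powr_numeral_divide)
  moreover have "r powr (numeral k / numeral d) \<le> X + Y"
    using assms by (intro powr_numeral_divide_le) auto
  ultimately show "r powr (numeral k / numeral d)
      \<le> x powr (numeral k / numeral d) + y powr (numeral k / numeral d)"
    by linarith
qed (use assms in auto)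

section \<open>Eigenvalue bounds for real matrices\<close>

lemma mult_mat_vec_index_sum:
  "A \<in> carrier_mat n n \<Longrightarrow> v \<in> carrier_vec n \<Longrightarrow> i < n \<Longrightarrow>
    (A *\<^sub>v v) $ i = (\<Sum>j<n. A $$ (i, j) * v $ j)"
  by (auto simp: scalar_prod_def lessThan_atLeast0 intro!: sum.cong)

lemma eigenvalueI:
  assumes "A \<in> carrier_mat n n" "v \<in> carrier_vec n" "v \<noteq> 0\<^sub>v n"
    and "\<And>i. i < n \<Longrightarrow> (A *\<^sub>v v) $ i = k * v $ i"
  shows "eigenvalue A k"
proof -
  have "A *\<^sub>v v = k \<cdot>\<^sub>v v"
    using assms by (intro eq_vecI) auto
  then show ?thesis
    using assms unfolding eigenvalue_def eigenvector_def by auto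
qed

lemma eigenvalue_zero_if_equal_columns:
  fixes A :: "'a :: comm_ring_1 mat"
  assumes A: "A \<in> carrier_mat n n" and ij: "i < n" "j < n" "i \<noteq> j"
    and cols: "\<And>k. k < n \<Longrightarrow> A $$ (k, i) = A $$ (k, j)"
  shows "eigenvalue A 0"
proof (rule eigenvalueI[OF A])
  define v :: "'a vec" where "v = unit_vec n i - unit_vec n j"
  show v: "v \<in> carrier_vec n"
    unfolding v_def by simp
  show "v \<noteq> 0\<^sub>v n"
  proof
    assume "v = 0\<^sub>v n"
    then have "v $ i = 0"
      using ij by simp
    then show False
      using ij by (simp add: v_def)
  qed
  fix k assume k: "k < n"
  have "(A *\<^sub>v v) $ k = (\<Sum>l<n. A $$ (k, l) * (of_bool (l = i) - of_bool (l = j)))"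
    unfolding mult_mat_vec_index_sum[OF A v k] using ij by (auto simp: v_def intro!: sum.cong)
  also have "\<dots> = A $$ (k, i) - A $$ (k, j)"
    using ij by (simp add: right_diff_distrib sum_subtractf)
  finally show "(A *\<^sub>v v) $ k = 0 * v $ k"
    using cols[OF k] by simp
qed

lemma finite_eigenvalues:
  assumes "(A :: 'a :: field mat) \<in> carrier_mat n n"
  shows "finite {k. eigenvalue A k}"
proof -
  have "char_poly A \<noteq> 0"
    using degree_monic_char_poly[OF assms] by auto
  then have "finite {k. poly (char_poly A) k = 0}"
    by (rule poly_roots_finite)
  then show ?thesis
    using eigenvalue_root_char_poly[OF assms] by simp
qed

lemma eigenvalue_le_largest_eig:
  "A \<in> carrier_mat n n \<Longrightarrow> eigenvalue A k \<Longrightarrow> k \<le> largest_eig A"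
  unfolding largest_eig_def by (auto intro: Max_ge finite_eigenvalues)

lemma largest_eig_le:
  assumes "A \<in> carrier_mat n n" "eigenvalue A k" "\<And>k. eigenvalue A k \<Longrightarrow> k \<le> \<mu>"
  shows "largest_eig A \<le> \<mu>"
  unfolding largest_eig_def using assms finite_eigenvalues[OF assms(1)] by (subst Max_le_iff) auto

text \<open>Compare an eigenvector v with w at an index maximising |v i| / w i.\<close>

lemma eigenvalue_le_Collatz_Wielandt:
  fixes A :: "real mat"
  assumes A: "A \<in> carrier_mat n n" and nonneg: "\<And>i j. i < n \<Longrightarrow> j < n \<Longrightarrow> 0 \<le> A $$ (i, j)"
    and w: "w \<in> carrier_vec n" and wpos: "\<And>i. i < n \<Longrightarrow> 0 < w $ i"
    and row: "\<And>i. i < n \<Longrightarrow> (A *\<^sub>v w) $ i \<le> \<mu> * w $ i"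
    and ev: "eigenvalue A k"
  shows "k \<le> \<mu>"
proof -
  obtain v where v: "v \<in> carrier_vec n" "v \<noteq> 0\<^sub>v n" "A *\<^sub>v v = k \<cdot>\<^sub>v v"
    using ev A unfolding eigenvalue_def eigenvector_def by auto
  obtain j0 where j0: "j0 < n" "v $ j0 \<noteq> 0"
    using v(1,2) by (metis eq_vecI carrier_vecD index_zero_vec)
  define f where "f i = \<bar>v $ i\<bar> / w $ i" for i
  have fin: "finite (f ` {..<n})" "f ` {..<n} \<noteq> {}"
    using j0 by auto
  obtain i0 where i0: "i0 < n" "f i0 = Max (f ` {..<n})"
    using Max_in[OF fin] by auto
  define c where "c = f i0"
  have f_le: "f j \<le> c" if "j < n" for j
    unfolding c_def i0(2) using fin that by auto
  have c_pos: "0 < c"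
  proof -
    have "0 < f j0"
      using j0 wpos[of j0] by (simp add: f_def)
    then show ?thesis
      using f_le[OF j0(1)] by linarith
  qed
  have v_le: "\<bar>v $ j\<bar> \<le> c * w $ j" if "j < n" for j
    using f_le[OF that] wpos[OF that] by (simp add: f_def divide_le_eq)
  have v_i0: "\<bar>v $ i0\<bar> = c * w $ i0"
    using wpos[OF i0(1)] by (simp add: c_def f_def)
  have "\<bar>k\<bar> * (c * w $ i0) = \<bar>(A *\<^sub>v v) $ i0\<bar>"
    using v i0(1) v_i0 by (simp add: abs_mult)
  also have "\<dots> \<le> (\<Sum>j<n. \<bar>A $$ (i0, j) * v $ j\<bar>)"
    unfolding mult_mat_vec_index_sum[OF A v(1) i0(1)] by (rule sum_abs)
  also have "\<dots> \<le> (\<Sum>j<n. A $$ (i0, j) * (c * w $ j))"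
    using nonneg i0(1) v_le by (intro sum_mono) (auto simp: abs_mult intro: mult_left_mono)
  also have "\<dots> = c * (A *\<^sub>v w) $ i0"
    by (simp add: mult_mat_vec_index_sum[OF A w i0(1)] sum_distrib_left algebra_simps)
  also have "\<dots> \<le> c * (\<mu> * w $ i0)"
    using row[OF i0(1)] c_pos by simp
  finally have "\<bar>k\<bar> * (c * w $ i0) \<le> \<mu> * (c * w $ i0)"
    by (simp add: algebra_simps)
  then show ?thesis
    using c_pos wpos[OF i0(1)] by simp
qed

section \<open>The p-Sombor matrices of U3 and U4\<close>

lemma sombor_mat_carrier: "sombor_mat p n E \<in> carrier_mat n n"
  unfolding sombor_mat_def by simp

lemma sombor_mat_index:
  "i < n \<Longrightarrow> j < n \<Longrightarrow> sombor_mat p n E $$ (i, j) =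
    (if E i j then sombor_weight p (deg n E i) (deg n E j) else 0)"
  unfolding sombor_mat_def sombor_weight_def by simp

lemma sombor_mat_nonneg: "i < n \<Longrightarrow> j < n \<Longrightarrow> 0 \<le> sombor_mat p n E $$ (i, j)"
  by (simp add: sombor_mat_index sombor_weight_nonneg)

lemma sombor_mat_mult_vec_index:
  assumes "v \<in> carrier_vec n" "i < n"
  shows "(sombor_mat p n E *\<^sub>v v) $ i =
    (\<Sum>j | j < n \<and> E i j. sombor_weight p (deg n E i) (deg n E j) * v $ j)"
proof -
  have "(sombor_mat p n E *\<^sub>v v) $ i =
      (\<Sum>j<n. if E i j then sombor_weight p (deg n E i) (deg n E j) * v $ j else 0)"
    unfolding mult_mat_vec_index_sum[OF sombor_mat_carrier assms]
    using assms(2) by (intro sum.cong) (auto simp: sombor_mat_index)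
  also have "\<dots> = (\<Sum>j | j < n \<and> E i j. sombor_weight p (deg n E i) (deg n E j) * v $ j)"
    by (subst sum.inter_filter[symmetric]) (auto intro!: sum.cong)
  finally show ?thesis .
qed

lemma U4_neighbours:
  assumes "5 \<le> n"
  shows "{j. j < n \<and> U4_edge n 0 j} = {1, 2} \<union> {5..<n}"
    and "{j. j < n \<and> U4_edge n 1 j} = {0, 2, 3, 4}"
    and "{j. j < n \<and> U4_edge n 2 j} = {0, 1}"
    and "{j. j < n \<and> U4_edge n 3 j} = {1}"
    and "{j. j < n \<and> U4_edge n 4 j} = {1}"
    and "5 \<le> i \<Longrightarrow> i < n \<Longrightarrow> {j. j < n \<and> U4_edge n i j} = {0}"
  using assms unfolding U4_edge_def by (auto simp: doubleton_eq_iff)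

lemma U3_neighbours:
  assumes "4 \<le> n"
  shows "{j. j < n \<and> U3_edge n 0 j} = {1, 3}"
    and "{j. j < n \<and> U3_edge n 1 j} = {0, 2}"
    and "{j. j < n \<and> U3_edge n 2 j} = {1, 3}"
    and "{j. j < n \<and> U3_edge n 3 j} = {0, 2} \<union> {4..<n}"
    and "4 \<le> i \<Longrightarrow> i < n \<Longrightarrow> {j. j < n \<and> U3_edge n i j} = {3}"
  using assms unfolding U3_edge_def by (auto simp: doubleton_eq_iff)

lemma card_pair_Un_atLeastLessThan:
  "a < m \<Longrightarrow> b < m \<Longrightarrow> a \<noteq> b \<Longrightarrow> card ({a, b} \<union> {m..<n}) = 2 + (n - m)"
  by (subst card_Un_disjoint) auto

lemma U4_deg:
  assumes "5 \<le> n"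
  shows "deg n (U4_edge n) 0 = n - 3" "deg n (U4_edge n) 1 = 4" "deg n (U4_edge n) 2 = 2"
    "deg n (U4_edge n) 3 = 1" "deg n (U4_edge n) 4 = 1"
    "5 \<le> i \<Longrightarrow> i < n \<Longrightarrow> deg n (U4_edge n) i = 1"
  unfolding deg_def U4_neighbours[OF assms] using assms by (simp_all add: card_pair_Un_atLeastLessThan)

lemma U3_deg:
  assumes "4 \<le> n"
  shows "deg n (U3_edge n) 0 = 2" "deg n (U3_edge n) 1 = 2" "deg n (U3_edge n) 2 = 2"
    "deg n (U3_edge n) 3 = n - 2"
    "4 \<le> i \<Longrightarrow> i < n \<Longrightarrow> deg n (U3_edge n) i = 1"
  unfolding deg_def U3_neighbours[OF assms] using assms by (simp_all add: card_pair_Un_atLeastLessThan)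

lemma U4_mult_vec:
  fixes n :: nat and p :: real and v :: "real vec"
  defines "M \<equiv> sombor_mat p n (U4_edge n)" and "d \<equiv> real (n - 3)"
  assumes n: "5 \<le> n" and v: "v \<in> carrier_vec n"
  shows "(M *\<^sub>v v) $ 0 = sombor_weight p d 4 * v $ 1 + sombor_weight p d 2 * v $ 2
      + (\<Sum>j = 5..<n. sombor_weight p d 1 * v $ j)"
    and "(M *\<^sub>v v) $ 1 = sombor_weight p d 4 * v $ 0 + sombor_weight p 4 2 * v $ 2
      + sombor_weight p 4 1 * (v $ 3 + v $ 4)"
    and "(M *\<^sub>v v) $ 2 = sombor_weight p d 2 * v $ 0 + sombor_weight p 4 2 * v $ 1"
    and "i \<in> {3, 4} \<Longrightarrow> (M *\<^sub>v v) $ i = sombor_weight p 4 1 * v $ 1"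
    and "5 \<le> i \<Longrightarrow> i < n \<Longrightarrow> (M *\<^sub>v v) $ i = sombor_weight p d 1 * v $ 0"
  using n unfolding M_def d_def
  by (auto simp: sombor_mat_mult_vec_index[OF v] U4_neighbours U4_deg sum.union_disjoint
      U4_neighbours(2)[unfolded One_nat_def] U4_deg(2)[unfolded One_nat_def]
      sombor_weight_commute algebra_simps cong: sum.cong_simp)

lemma U3_mult_vec:
  fixes n :: nat and p :: real and v :: "real vec"
  defines "M \<equiv> sombor_mat p n (U3_edge n)"
    and "a \<equiv> sombor_weight p (real (n - 2)) 2" and "b \<equiv> sombor_weight p 2 2"
    and "c \<equiv> sombor_weight p (real (n - 2)) 1"
  assumes n: "4 \<le> n" and v: "v \<in> carrier_vec n"
  shows "i \<in> {0, 2} \<Longrightarrow> (M *\<^sub>v v) $ i = b * v $ 1 + a * v $ 3"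
    and "(M *\<^sub>v v) $ 1 = b * (v $ 0 + v $ 2)"
    and "(M *\<^sub>v v) $ 3 = a * (v $ 0 + v $ 2) + (\<Sum>j = 4..<n. c * v $ j)"
    and "4 \<le> i \<Longrightarrow> i < n \<Longrightarrow> (M *\<^sub>v v) $ i = c * v $ 3"
  using n unfolding M_def a_def b_def c_def
  by (auto simp: sombor_mat_mult_vec_index[OF v] U3_neighbours U3_deg sum.union_disjoint
      U3_neighbours(2)[unfolded One_nat_def] U3_deg(2)[unfolded One_nat_def]
      sombor_weight_commute algebra_simps cong: sum.cong_simp)

section \<open>An upper bound for the spectral radius of U4\<close>

text \<open>The test vector takes the values \<mu>, Y, Z at x, y, z, the value S(4,1) Y / \<mu> at the two
  pendants of y and S(d,1) at the pendants of x; the pendant rows then hold with equality.\<close>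

lemma U4_eigenvalue_le:
  fixes n :: nat and p \<mu> Y Z k :: real
  defines "d \<equiv> real (n - 3)"
  assumes n: "5 \<le> n" and p: "0 < p" and pos: "0 < \<mu>" "0 < Y" "0 < Z"
    and row0: "sombor_weight p d 4 * Y + sombor_weight p d 2 * Z
      + real (n - 5) * (sombor_weight p d 1)\<^sup>2 \<le> \<mu>\<^sup>2"
    and row1: "sombor_weight p d 4 * \<mu> + sombor_weight p 4 2 * Z
      + 2 * (sombor_weight p 4 1)\<^sup>2 * Y / \<mu> \<le> \<mu> * Y"
    and row2: "sombor_weight p d 2 * \<mu> + sombor_weight p 4 2 * Y \<le> \<mu> * Z"
    and ev: "eigenvalue (sombor_mat p n (U4_edge n)) k"
  shows "k \<le> \<mu>"
proof -
  have S_pos: "0 < sombor_weight p x y" if "0 < x" "0 < y" for x y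
    using sombor_weight_ge_left[of x y p] that p by linarith
  define w where "w = vec n (\<lambda>j. if j = 0 then \<mu> else if j = 1 then Y else if j = 2 then Z
      else if j < 5 then sombor_weight p 4 1 * Y / \<mu> else sombor_weight p d 1)"
  have w: "w \<in> carrier_vec n"
    by (simp add: w_def)
  have w_pos: "0 < w $ i" if "i < n" for i
    using that pos n by (auto simp: w_def d_def intro!: S_pos divide_pos_pos mult_pos_pos)
  note row = U4_mult_vec[OF n w, where p = p, folded d_def]
  show ?thesis
  proof (rule eigenvalue_le_Collatz_Wielandt[OF sombor_mat_carrier sombor_mat_nonneg w w_pos _ ev])
    fix i assume i: "i < n"
    consider "i = 0" | "i = 1" | "i = 2" | "i \<in> {3, 4}" | "5 \<le> i"
      by force
    then show "(sombor_mat p n (U4_edge n) *\<^sub>v w) $ i \<le> \<mu> * w $ i"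
    proof cases
      case 1
      have "(\<Sum>j = 5..<n. sombor_weight p d 1 * w $ j) = real (n - 5) * (sombor_weight p d 1)\<^sup>2"
        by (simp add: w_def power2_eq_square cong: sum.cong_simp)
      then have "(sombor_mat p n (U4_edge n) *\<^sub>v w) $ i = sombor_weight p d 4 * Y + sombor_weight p d 2 * Z
          + real (n - 5) * (sombor_weight p d 1)\<^sup>2"
        using row(1) n by (simp add: 1 w_def)
      with row0 n show ?thesis
        by (simp add: 1 w_def power2_eq_square)
    next
      case 2
      have "sombor_weight p 4 1 * (w $ 3 + w $ 4) = 2 * (sombor_weight p 4 1)\<^sup>2 * Y / \<mu>"
        using n by (simp add: w_def power2_eq_square)
      then have "(sombor_mat p n (U4_edge n) *\<^sub>v w) $ i = sombor_weight p d 4 * \<mu> + sombor_weight p 4 2 * Z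
          + 2 * (sombor_weight p 4 1)\<^sup>2 * Y / \<mu>"
        using row(2) n by (simp add: 2 w_def)
      with row1 n show ?thesis
        by (simp add: 2 w_def)
    next
      case 3
      then show ?thesis
        using row(3) row2 n by (simp add: w_def)
    qed (use row(4,5) i pos n in \<open>auto simp: w_def\<close>)
  qed
qed

lemma U4_eigenvalue_zero:
  assumes n: "5 \<le> n"
  shows "eigenvalue (sombor_mat p n (U4_edge n)) 0"
proof (rule eigenvalue_zero_if_equal_columns[OF sombor_mat_carrier, of 3 _ 4])
  fix k assume "k < n"
  moreover have "U4_edge n k 3 = U4_edge n k 4"
    using n unfolding U4_edge_def by (auto simp: doubleton_eq_iff)
  ultimately show "sombor_mat p n (U4_edge n) $$ (k, 3) = sombor_mat p n (U4_edge n) $$ (k, 4)"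
    using n by (simp add: sombor_mat_index U4_deg)
qed (use n in auto)

lemma largest_eig_U4_le:
  fixes n :: nat and p \<mu> Y Z A B G D E :: real
  defines "d \<equiv> real (n - 3)"
  assumes n: "5 \<le> n" and p: "0 < p" and pos: "0 < \<mu>" "0 < Y" "0 < Z"
    and A: "sombor_weight p d 4 \<le> A" and B: "sombor_weight p d 2 \<le> B"
    and G: "sombor_weight p 4 2 \<le> G" and D: "(sombor_weight p 4 1)\<^sup>2 \<le> D"
    and E: "(sombor_weight p d 1)\<^sup>2 \<le> E"
    and row0: "A * Y + B * Z + real (n - 5) * E \<le> \<mu>\<^sup>2"
    and row1: "A * \<mu> + G * Z + 2 * D * Y / \<mu> \<le> \<mu> * Y"
    and row2: "B * \<mu> + G * Y \<le> \<mu> * Z"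
  shows "largest_eig (sombor_mat p n (U4_edge n)) \<le> \<mu>"
proof (rule largest_eig_le[OF sombor_mat_carrier U4_eigenvalue_zero[OF n]])
  fix k assume ev: "eigenvalue (sombor_mat p n (U4_edge n)) k"
  show "k \<le> \<mu>"
  proof (rule U4_eigenvalue_le[OF n p pos _ _ _ ev, folded d_def])
    have "sombor_weight p d 4 * Y + sombor_weight p d 2 * Z + real (n - 5) * (sombor_weight p d 1)\<^sup>2
        \<le> A * Y + B * Z + real (n - 5) * E"
      using A B E pos by (intro add_mono mult_right_mono mult_left_mono) auto
    then show "sombor_weight p d 4 * Y + sombor_weight p d 2 * Z
        + real (n - 5) * (sombor_weight p d 1)\<^sup>2 \<le> \<mu>\<^sup>2"
      using row0 by linarith
    have "sombor_weight p d 4 * \<mu> + sombor_weight p 4 2 * Z + 2 * (sombor_weight p 4 1)\<^sup>2 * Y / \<mu>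
        \<le> A * \<mu> + G * Z + 2 * D * Y / \<mu>"
      using A G D pos by (intro add_mono mult_right_mono divide_right_mono) auto
    then show "sombor_weight p d 4 * \<mu> + sombor_weight p 4 2 * Z
        + 2 * (sombor_weight p 4 1)\<^sup>2 * Y / \<mu> \<le> \<mu> * Y"
      using row1 by linarith
    have "sombor_weight p d 2 * \<mu> + sombor_weight p 4 2 * Y \<le> B * \<mu> + G * Y"
      using B G pos by (intro add_mono mult_right_mono) auto
    then show "sombor_weight p d 2 * \<mu> + sombor_weight p 4 2 * Y \<le> \<mu> * Z"
      using row2 by linarith
  qed
qed

section \<open>A lower bound for the spectral radius of U3\<close>

lemma quadratic_root_gt:
  fixes B C t\<^sub>0 :: real
  assumes "t\<^sub>0\<^sup>2 - B * t\<^sub>0 + C < 0"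
  shows "\<exists>t > t\<^sub>0. t\<^sup>2 - B * t + C = 0"
proof -
  define \<Delta> where "\<Delta> = B\<^sup>2 - 4 * C"
  have "(2 * t\<^sub>0 - B)\<^sup>2 < \<Delta>"
    using assms by (simp add: \<Delta>_def power2_eq_square algebra_simps)
  then have "2 * t\<^sub>0 - B < sqrt \<Delta>"
    by (metis abs_less_iff real_less_rsqrt real_sqrt_abs)
  moreover have "0 \<le> \<Delta>"
    using \<open>(2 * t\<^sub>0 - B)\<^sup>2 < \<Delta>\<close> zero_le_power2[of "2 * t\<^sub>0 - B"] by linarith
  ultimately show ?thesis
    by (intro exI[of _ "(B + sqrt \<Delta>) / 2"])
      (auto simp: \<Delta>_def power2_eq_square field_simps)
qed

lemma U3_hub_equation:
  fixes a b c k l X :: real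
  assumes l: "0 < l" and den: "0 < l\<^sup>2 - 2 * b\<^sup>2" and X: "X * (l\<^sup>2 - 2 * b\<^sup>2) = a * l"
    and root: "(l\<^sup>2)\<^sup>2 - (2 * b\<^sup>2 + 2 * a\<^sup>2 + k * c\<^sup>2) * l\<^sup>2 + 2 * k * b\<^sup>2 * c\<^sup>2 = 0"
  shows "a * (X + X) + k * c\<^sup>2 / l = l"
proof -
  have "(a * (X + X) + k * c\<^sup>2 / l) * (l * (l\<^sup>2 - 2 * b\<^sup>2))
      = 2 * a * (X * (l\<^sup>2 - 2 * b\<^sup>2)) * l + k * c\<^sup>2 * (l\<^sup>2 - 2 * b\<^sup>2)"
    using l by (simp add: field_simps)
  also have "\<dots> = l * (l * (l\<^sup>2 - 2 * b\<^sup>2))"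
    unfolding X using root by (simp add: algebra_simps power2_eq_square)
  finally show ?thesis
    using l den by simp
qed

text \<open>On the eigenvector below, the eigen-equations at all vertices but the hub 3 hold by
  construction; the equation at the hub is the quadratic in t = \<lambda>^2.\<close>

lemma U3_eigenvalue:
  fixes n :: nat and p t :: real
  defines "a \<equiv> sombor_weight p (real (n - 2)) 2" and "b \<equiv> sombor_weight p 2 2"
    and "c \<equiv> sombor_weight p (real (n - 2)) 1" and "k \<equiv> real (n - 4)"
  assumes n: "4 \<le> n" and t: "2 * b\<^sup>2 < t"
    and root: "t\<^sup>2 - (2 * b\<^sup>2 + 2 * a\<^sup>2 + k * c\<^sup>2) * t + 2 * k * b\<^sup>2 * c\<^sup>2 = 0"
  shows "eigenvalue (sombor_mat p n (U3_edge n)) (sqrt t)"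
proof -
  define l where "l = sqrt t"
  have "0 < t"
    using t zero_le_power2[of b] by linarith
  then have l: "0 < l" "l\<^sup>2 = t"
    by (auto simp: l_def)
  have den: "0 < t - 2 * b\<^sup>2"
    using t by simp
  define X where "X = a * l / (t - 2 * b\<^sup>2)"
  have X: "X * (t - 2 * b\<^sup>2) = a * l"
    using den by (simp add: X_def)
  define v where "v = vec n (\<lambda>j. if j = 3 then 1 else if j = 0 \<or> j = 2 then X
      else if j = 1 then 2 * b * X / l else c / l)"
  have v: "v \<in> carrier_vec n"
    by (simp add: v_def)
  note row = U3_mult_vec[OF n v, where p = p, folded a_def b_def c_def]
  show ?thesis
    unfolding l_def[symmetric]
  proof (rule eigenvalueI[OF sombor_mat_carrier v])
    show "v \<noteq> 0\<^sub>v n"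
      using n by (auto simp: v_def dest!: arg_cong[of _ _ "\<lambda>v. v $ 3"])
  next
    fix i assume i: "i < n"
    consider "i \<in> {0, 2}" | "i = 1" | "i = 3" | "4 \<le> i"
      by force
    then show "(sombor_mat p n (U3_edge n) *\<^sub>v v) $ i = l * v $ i"
    proof cases
      case 1
      have "b * (2 * b * X / l) + a = l * X"
        using X l by (simp add: field_simps power2_eq_square)
      then show ?thesis
        using row(1)[OF 1] 1 n by (auto simp: v_def)
    next
      case 2
      then show ?thesis
        using row(2) n l by (simp add: v_def)
    next
      case 3
      have "(\<Sum>j = 4..<n. c * v $ j) = k * c\<^sup>2 / l"
        by (simp add: v_def k_def power2_eq_square cong: sum.cong_simp)
      then have "(sombor_mat p n (U3_edge n) *\<^sub>v v) $ i = a * (X + X) + k * c\<^sup>2 / l"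
        using row(3) 3 n by (simp add: v_def)
      also have "\<dots> = l"
        using U3_hub_equation[of l b X a k c] l den X root by simp
      finally show ?thesis
        using 3 n by (simp add: v_def)
    next
      case 4
      then show ?thesis
        using row(4)[OF 4 i] 4 i n l by (simp add: v_def)
    qed
  qed
qed

lemma largest_eig_U3_gt:
  fixes n :: nat and p \<mu> :: real
  defines "a \<equiv> sombor_weight p (real (n - 2)) 2" and "b \<equiv> sombor_weight p 2 2"
    and "c \<equiv> sombor_weight p (real (n - 2)) 1" and "k \<equiv> real (n - 4)"
  assumes n: "4 \<le> n" and \<mu>: "2 * b\<^sup>2 \<le> \<mu>\<^sup>2"
    and neg: "\<mu>^4 - (2 * b\<^sup>2 + 2 * a\<^sup>2 + k * c\<^sup>2) * \<mu>\<^sup>2 + 2 * k * b\<^sup>2 * c\<^sup>2 < 0"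
  shows "\<mu> < largest_eig (sombor_mat p n (U3_edge n))"
proof -
  have "(\<mu>\<^sup>2)\<^sup>2 - (2 * b\<^sup>2 + 2 * a\<^sup>2 + k * c\<^sup>2) * \<mu>\<^sup>2 + 2 * k * b\<^sup>2 * c\<^sup>2 < 0"
    using neg by (simp flip: power_mult)
  then obtain t where t: "\<mu>\<^sup>2 < t" "t\<^sup>2 - (2 * b\<^sup>2 + 2 * a\<^sup>2 + k * c\<^sup>2) * t + 2 * k * b\<^sup>2 * c\<^sup>2 = 0"
    using quadratic_root_gt by blast
  have "eigenvalue (sombor_mat p n (U3_edge n)) (sqrt t)"
    using U3_eigenvalue[OF n, of p t] t \<mu> by (simp add: a_def b_def c_def k_def)
  moreover have "\<mu> < sqrt t"
    using t(1) real_less_rsqrt by (cases "\<mu> < 0") (auto intro: order.strict_trans2)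
  ultimately show ?thesis
    using eigenvalue_le_largest_eig[OF sombor_mat_carrier] by (blast intro: order.strict_trans2)
qed

text \<open>The value of the quadratic at \<mu>^2 decreases when a, b, c grow, as long as \<mu>^2 \<ge> k c^2 and
  \<mu>^2 \<ge> 2 b^2. For p \<ge> 2 the hypotheses on \<mu> ensure this, as c^2 \<le> (n - 2)^2 + 1 and b^2 \<le> 8.\<close>

lemma largest_eig_U3_gt_of_bounds:
  fixes n :: nat and p \<mu> a\<^sub>0 b\<^sub>0 c\<^sub>0 :: real
  defines "a \<equiv> sombor_weight p (real (n - 2)) 2" and "b \<equiv> sombor_weight p 2 2"
    and "c \<equiv> sombor_weight p (real (n - 2)) 1" and "k \<equiv> real (n - 4)"
  assumes n: "4 \<le> n" and p: "2 \<le> p"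
    and a: "0 \<le> a\<^sub>0" "a\<^sub>0 \<le> a" and b: "0 \<le> b\<^sub>0" "b\<^sub>0 \<le> b" and c: "0 \<le> c\<^sub>0" "c\<^sub>0 \<le> c"
    and \<mu>_b: "16 \<le> \<mu>\<^sup>2" and \<mu>_c: "k * ((real n - 2)\<^sup>2 + 1) \<le> \<mu>\<^sup>2"
    and neg: "\<mu>^4 - (2 * b\<^sub>0\<^sup>2 + 2 * a\<^sub>0\<^sup>2 + k * c\<^sub>0\<^sup>2) * \<mu>\<^sup>2 + 2 * k * b\<^sub>0\<^sup>2 * c\<^sub>0\<^sup>2 < 0"
  shows "\<mu> < largest_eig (sombor_mat p n (U3_edge n))"
proof -
  define t where "t = \<mu>\<^sup>2"
  have k: "0 \<le> k"
    by (simp add: k_def)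
  have sq: "a\<^sub>0\<^sup>2 \<le> a\<^sup>2" "b\<^sub>0\<^sup>2 \<le> b\<^sup>2" "c\<^sub>0\<^sup>2 \<le> c\<^sup>2"
    using a b c by (auto intro: power_mono)
  have "b\<^sup>2 \<le> 8"
    using sombor_weight_power2_le[OF p, of 2 2] by (simp add: b_def)
  then have \<mu>_b': "2 * b\<^sup>2 \<le> \<mu>\<^sup>2"
    using \<mu>_b by linarith
  then have t_b: "0 \<le> t - 2 * b\<^sub>0\<^sup>2"
    using sq by (simp add: t_def)
  have "c\<^sup>2 \<le> (real n - 2)\<^sup>2 + 1"
    using sombor_weight_power2_le[OF p, of "real (n - 2)" 1] n by (simp add: c_def of_nat_diff)
  then have "k * c\<^sup>2 \<le> k * ((real n - 2)\<^sup>2 + 1)"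
    using k by (rule mult_left_mono)
  then have t_c: "0 \<le> t - k * c\<^sup>2"
    using \<mu>_c by (simp add: t_def)
  have "\<mu>^4 - (2 * b\<^sup>2 + 2 * a\<^sup>2 + k * c\<^sup>2) * \<mu>\<^sup>2 + 2 * k * b\<^sup>2 * c\<^sup>2
      = (\<mu>^4 - (2 * b\<^sub>0\<^sup>2 + 2 * a\<^sub>0\<^sup>2 + k * c\<^sub>0\<^sup>2) * \<mu>\<^sup>2 + 2 * k * b\<^sub>0\<^sup>2 * c\<^sub>0\<^sup>2)
        - 2 * (a\<^sup>2 - a\<^sub>0\<^sup>2) * t - 2 * (b\<^sup>2 - b\<^sub>0\<^sup>2) * (t - k * c\<^sup>2)
        - k * (c\<^sup>2 - c\<^sub>0\<^sup>2) * (t - 2 * b\<^sub>0\<^sup>2)"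
    by (simp add: t_def algebra_simps)
  moreover have "0 \<le> 2 * (a\<^sup>2 - a\<^sub>0\<^sup>2) * t" "0 \<le> 2 * (b\<^sup>2 - b\<^sub>0\<^sup>2) * (t - k * c\<^sup>2)"
    "0 \<le> k * (c\<^sup>2 - c\<^sub>0\<^sup>2) * (t - 2 * b\<^sub>0\<^sup>2)"
    using sq k t_b t_c by (simp_all add: t_def)
  ultimately have "\<mu>^4 - (2 * b\<^sup>2 + 2 * a\<^sup>2 + k * c\<^sup>2) * \<mu>\<^sup>2 + 2 * k * b\<^sup>2 * c\<^sup>2 < 0"
    using neg by linarith
  with \<mu>_b' show ?thesis
    unfolding a_def b_def c_def k_def by (rule largest_eig_U3_gt[OF n])
qed

section \<open>Separating the spectral radii\<close>

text \<open>For m = n - 3 and large n, \<rho>(U4)^2 \<approx> m^3 while \<rho>(U3)^2 \<approx> m^3 + 3 m^2;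
  the value \<mu>^2 = m^3 + 2 m^2 + 7 m separates them once m \<ge> 6.\<close>

lemma largest_eig_U4_le_large:
  fixes n :: nat and p :: real
  defines "m \<equiv> real n - 3"
  assumes n: "9 \<le> n" and p: "2 \<le> p"
  shows "largest_eig (sombor_mat p n (U4_edge n)) \<le> sqrt (m^3 + 2 * m\<^sup>2 + 7 * m)"
proof -
  define \<mu> where "\<mu> = sqrt (m^3 + 2 * m\<^sup>2 + 7 * m)"
  have m: "6 \<le> m"
    using n by (simp add: m_def)
  have R: "real (n - 3) = m" "real (n - 5) = m - 2"
    using n by (auto simp: m_def)
  have \<mu>2: "\<mu>\<^sup>2 = m^3 + 2 * m\<^sup>2 + 7 * m" and \<mu>_pos: "0 < \<mu>"
    using m by (auto simp: \<mu>_def add_pos_pos)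
  have "(3 * m)\<^sup>2 \<le> \<mu>\<^sup>2"
  proof -
    have "0 \<le> m * ((m - 6) * (m - 1) + 1)"
      using m by simp
    then show ?thesis
      unfolding \<mu>2 by (simp add: power2_eq_square power3_eq_cube algebra_simps)
  qed
  then have \<mu>_ge: "3 * m \<le> \<mu>"
    by (rule power2_le_imp_le) (use \<mu>_pos in simp)
  show ?thesis
    unfolding \<mu>_def[symmetric]
  proof (rule largest_eig_U4_le[where n = n and Y = "2 * m" and Z = "2 * m" and A = "m + 3/2" and B = "m + 1"
        and G = "9/2" and D = 17 and E = "m\<^sup>2 + 1", unfolded R])
    show "sombor_weight p m 4 \<le> m + 3/2" "sombor_weight p m 2 \<le> m + 1"
      using m by (auto intro!: sombor_weight_le_of_sq[OF p] simp: power2_eq_square algebra_simps)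
    show "sombor_weight p 4 2 \<le> 9/2"
      by (rule sombor_weight_le_of_sq[OF p]) (auto simp: power2_eq_square)
    show "(sombor_weight p 4 1)\<^sup>2 \<le> 17" "(sombor_weight p m 1)\<^sup>2 \<le> m\<^sup>2 + 1"
      using sombor_weight_power2_le[OF p, of 4 1] sombor_weight_power2_le[OF p, of m 1] m by auto
    show "(m + 3/2) * (2 * m) + (m + 1) * (2 * m) + (m - 2) * (m\<^sup>2 + 1) \<le> \<mu>\<^sup>2"
      unfolding \<mu>2 using m by (simp add: algebra_simps power2_eq_square power3_eq_cube)
    have "9 * m \<le> 3 * m * (m - 1)"
      using m by (simp add: algebra_simps power2_eq_square)
    also have "\<dots> \<le> \<mu> * (m - 1)"
      using \<mu>_ge m by (intro mult_right_mono) auto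
    finally show "(m + 1) * \<mu> + 9/2 * (2 * m) \<le> \<mu> * (2 * m)"
      by (simp add: algebra_simps)
    have "68 * m / \<mu> \<le> 68 * m / (3 * m)"
      using \<mu>_ge m by (intro divide_left_mono) auto
    also have "\<dots> = 68 / 3"
      using m by simp
    finally have "2 * 17 * (2 * m) / \<mu> \<le> 68 / 3"
      by simp
    moreover have "9 * m + 68 / 3 \<le> 3 * m * (m - 3/2)"
    proof -
      have "6 * m \<le> m * m"
        using m by (intro mult_right_mono) auto
      moreover have "3 * m * (m - 3/2) = 3 * (m * m) - 9/2 * m"
        by (simp add: algebra_simps)
      ultimately show ?thesis
        using m by linarith
    qed
    moreover have "3 * m * (m - 3/2) \<le> \<mu> * (m - 3/2)"
      using \<mu>_ge m by (intro mult_right_mono) auto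
    ultimately show "(m + 3/2) * \<mu> + 9/2 * (2 * m) + 2 * 17 * (2 * m) / \<mu> \<le> \<mu> * (2 * m)"
      by (simp add: algebra_simps)
  qed (use n p \<mu>_pos m in auto)
qed

lemma largest_eig_U3_gt_large:
  fixes n :: nat and p :: real
  defines "m \<equiv> real n - 3"
  assumes n: "9 \<le> n" and p: "2 \<le> p"
  shows "sqrt (m^3 + 2 * m\<^sup>2 + 7 * m) < largest_eig (sombor_mat p n (U3_edge n))"
proof -
  define t where "t = m^3 + 2 * m\<^sup>2 + 7 * m"
  have m: "6 \<le> m"
    using n by (simp add: m_def)
  have R: "real (n - 2) = m + 1" "real (n - 4) = m - 1" "real n - 2 = m + 1"
    using n by (auto simp: m_def)
  have t_pos: "0 < t"
    using m by (simp add: t_def add_pos_pos)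
  have t_lt: "t < (m + 1)^3"
  proof -
    have "0 \<le> (m - 6) * (m + 2)"
      using m by simp
    then show ?thesis
      using m by (simp add: t_def algebra_simps power2_eq_square power3_eq_cube)
  qed
  show ?thesis
    unfolding t_def[symmetric]
  proof (rule largest_eig_U3_gt_of_bounds[OF _ p, where n = n and a\<^sub>0 = "m + 1" and b\<^sub>0 = 0 and c\<^sub>0 = "m + 1",
        unfolded R])
    show "m + 1 \<le> sombor_weight p (m + 1) 2" "m + 1 \<le> sombor_weight p (m + 1) 1"
      using m p by (auto intro!: sombor_weight_ge_left)
    have "0 \<le> m^3 + 2 * m\<^sup>2"
      using m by simp
    then have "16 \<le> t"
      using m unfolding t_def by linarith
    then show "16 \<le> (sqrt t)\<^sup>2"
      using t_pos by simp
    show "(m - 1) * ((m + 1)\<^sup>2 + 1) \<le> (sqrt t)\<^sup>2"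
      using m t_pos by (simp add: t_def algebra_simps power2_eq_square power3_eq_cube)
    have "t * t < t * (m + 1)^3"
      using t_lt t_pos by simp
    then show "(sqrt t)^4 - (2 * 0\<^sup>2 + 2 * (m + 1)\<^sup>2 + (m - 1) * (m + 1)\<^sup>2) * (sqrt t)\<^sup>2
        + 2 * (m - 1) * 0\<^sup>2 * (m + 1)\<^sup>2 < 0"
      using t_pos by (simp add: power4_eq_xxxx power2_eq_square power3_eq_cube algebra_simps)
  qed (use n m in \<open>auto simp: sombor_weight_nonneg\<close>)
qed

lemma largest_eig_U4_lt_U3_large:
  assumes "9 \<le> n" "2 \<le> p"
  shows "largest_eig (sombor_mat p n (U4_edge n)) < largest_eig (sombor_mat p n (U3_edge n))"
  using largest_eig_U4_le_large[OF assms] largest_eig_U3_gt_large[OF assms] by linarith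

lemma largest_eig_U4_lt_U3_8:
  assumes p: "2 \<le> p"
  shows "largest_eig (sombor_mat p 8 (U4_edge 8)) < largest_eig (sombor_mat p 8 (U3_edge 8))"
proof -
  have "largest_eig (sombor_mat p 8 (U4_edge 8)) \<le> 287/20"
  proof (rule largest_eig_U4_le[where n = 8 and Y = "56/5" and Z = 9 and A = "641/100"
        and B = "539/100" and G = "448/100" and D = 17 and E = 26])
    show "sombor_weight p (real (8 - 3)) 4 \<le> 641/100" "sombor_weight p (real (8 - 3)) 2 \<le> 539/100"
      "sombor_weight p 4 2 \<le> 448/100"
      by (rule sombor_weight_le_of_sq[OF p]; simp add: power2_eq_square)+
    show "(sombor_weight p 4 1)\<^sup>2 \<le> 17" "(sombor_weight p (real (8 - 3)) 1)\<^sup>2 \<le> 26"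
      using sombor_weight_power2_le[OF p, of 4 1] sombor_weight_power2_le[OF p, of 5 1] by auto
  qed (use p in \<open>auto simp: power2_eq_square\<close>)
  also have "287/20 < largest_eig (sombor_mat p 8 (U3_edge 8))"
  proof (rule largest_eig_U3_gt_of_bounds[OF _ p, where n = 8 and a\<^sub>0 = 6 and b\<^sub>0 = 0 and c\<^sub>0 = 6])
    show "6 \<le> sombor_weight p (real (8 - 2)) 2" "6 \<le> sombor_weight p (real (8 - 2)) 1"
      using p by (auto intro!: sombor_weight_ge_left)
  qed (auto simp: sombor_weight_nonneg power2_eq_square power4_eq_xxxx)
  finally show ?thesis .
qed

text \<open>For n = 7 the two spectral radii differ by less than 0.1 near p = 2, too little for the
  bounds valid for all p \<ge> 2. Instead p is confined to an interval [p0, p1]: as the weights decrease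
  in p, they are bounded above by their values at p0 and below by those at p1.\<close>

lemma largest_eig_U4_lt_U3_7_on_interval:
  fixes p p\<^sub>0 p\<^sub>1 u G D l a\<^sub>0 c\<^sub>0 \<mu> Y Z :: real
  assumes p: "2 \<le> p\<^sub>0" "p\<^sub>0 \<le> p" "p \<le> p\<^sub>1"
    and u: "sombor_weight p\<^sub>0 1 1 \<le> u" and G: "sombor_weight p\<^sub>0 4 2 \<le> G"
    and D: "sombor_weight p\<^sub>0 4 1 \<le> D"
    and l: "l \<le> sombor_weight p\<^sub>1 1 1" "0 \<le> l" and a: "a\<^sub>0 \<le> sombor_weight p\<^sub>1 5 2" "0 \<le> a\<^sub>0"
    and c: "c\<^sub>0 \<le> sombor_weight p\<^sub>1 5 1" "0 \<le> c\<^sub>0"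
    and pos: "0 < \<mu>" "0 < Y" "0 < Z"
    and row0: "4 * u * Y + G * Z + 2 * D\<^sup>2 \<le> \<mu>\<^sup>2"
    and row1: "4 * u * \<mu> + G * Z + 2 * D\<^sup>2 * Y / \<mu> \<le> \<mu> * Y"
    and row2: "G * \<mu> + G * Y \<le> \<mu> * Z"
    and \<mu>: "78 \<le> \<mu>\<^sup>2"
    and neg: "\<mu>^4 - (8 * l\<^sup>2 + 2 * a\<^sub>0\<^sup>2 + 3 * c\<^sub>0\<^sup>2) * \<mu>\<^sup>2 + 24 * l\<^sup>2 * c\<^sub>0\<^sup>2 < 0"
  shows "largest_eig (sombor_mat p 7 (U4_edge 7)) < largest_eig (sombor_mat p 7 (U3_edge 7))"
proof -
  have p0: "0 < p\<^sub>0" "0 < p"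
    using p by auto
  have upper: "sombor_weight p x y \<le> sombor_weight p\<^sub>0 x y" if "0 < x" "0 < y" for x y
    using sombor_weight_antimono[OF that p0(1) p(2)] .
  have lower: "sombor_weight p\<^sub>1 x y \<le> sombor_weight p x y" if "0 < x" "0 < y" for x y
    using sombor_weight_antimono[OF that p0(2) p(3)] .
  have "largest_eig (sombor_mat p 7 (U4_edge 7)) \<le> \<mu>"
  proof (rule largest_eig_U4_le[where n = 7 and A = "4 * u" and B = G and G = G
        and D = "D\<^sup>2" and E = "D\<^sup>2"])
    have "sombor_weight p 4 4 = 4 * sombor_weight p 1 1"
      using sombor_weight_diag[of 4 p] p0 by simp
    then show "sombor_weight p (real (7 - 3)) 4 \<le> 4 * u"
      using upper[of 1 1] u by simp
    show "sombor_weight p (real (7 - 3)) 2 \<le> G" "sombor_weight p 4 2 \<le> G"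
      using upper[of 4 2] G by simp_all
    have "(sombor_weight p 4 1)\<^sup>2 \<le> D\<^sup>2"
      using upper[of 4 1] D sombor_weight_nonneg by (intro power_mono) auto
    then show "(sombor_weight p 4 1)\<^sup>2 \<le> D\<^sup>2" "(sombor_weight p (real (7 - 3)) 1)\<^sup>2 \<le> D\<^sup>2"
      by simp_all
  qed (use p0 pos row0 row1 row2 in auto)
  also have "\<mu> < largest_eig (sombor_mat p 7 (U3_edge 7))"
  proof (rule largest_eig_U3_gt_of_bounds[where n = 7 and a\<^sub>0 = a\<^sub>0 and b\<^sub>0 = "2 * l"
        and c\<^sub>0 = c\<^sub>0])
    have "sombor_weight p 2 2 = 2 * sombor_weight p 1 1"
      using sombor_weight_diag[of 2 p] p0 by simp
    then show "2 * l \<le> sombor_weight p 2 2"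
      using lower[of 1 1] l by simp
    show "a\<^sub>0 \<le> sombor_weight p (real (7 - 2)) 2" "c\<^sub>0 \<le> sombor_weight p (real (7 - 2)) 1"
      using lower[of 5 2] lower[of 5 1] a c by simp_all
    show "\<mu>^4 - (2 * (2 * l)\<^sup>2 + 2 * a\<^sub>0\<^sup>2 + real (7 - 4) * c\<^sub>0\<^sup>2) * \<mu>\<^sup>2
        + 2 * real (7 - 4) * (2 * l)\<^sup>2 * c\<^sub>0\<^sup>2 < 0"
      using neg by (simp add: power_mult_distrib)
  qed (use p l a c \<mu> in auto)
  finally show ?thesis .
qed

lemma largest_eig_U4_lt_U3_7_on_2_25_12:
  assumes "2 \<le> p" "p \<le> 25/12"
  shows "largest_eig (sombor_mat p 7 (U4_edge 7)) < largest_eig (sombor_mat p 7 (U3_edge 7))"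
proof (rule largest_eig_U4_lt_U3_7_on_interval[OF _ assms,
      where \<mu> = "11893/1000" and Y = "11893/1000" and Z = "8951/1000"])
  show "sombor_weight 2 1 1 \<le> 14143/10000"
    by (rule sombor_weight_numeral_le) (simp_all add: power_divide le_divide_eq divide_le_eq)
  show "sombor_weight 2 4 2 \<le> 22361/5000"
    by (rule sombor_weight_numeral_le) (simp_all add: power_divide le_divide_eq divide_le_eq)
  show "sombor_weight 2 4 1 \<le> 2577/625"
    by (rule sombor_weight_numeral_le) (simp_all add: power_divide le_divide_eq divide_le_eq)
  show "13947/10000 \<le> sombor_weight (25/12) 1 1"
    by (rule sombor_weight_numeral_divide_ge[where X = 1 and Y = 1])
      (simp_all add: power_divide le_divide_eq divide_le_eq)
  show "5343/1000 \<le> sombor_weight (25/12) 5 2"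
    by (rule sombor_weight_numeral_divide_ge[where X = "285882459/10000000" and Y = "423785237/100000000"])
      (simp_all add: power_divide le_divide_eq divide_le_eq)
  show "3177/625 \<le> sombor_weight (25/12) 5 1"
    by (rule sombor_weight_numeral_divide_ge[where X = "285882459/10000000" and Y = 1])
      (simp_all add: power_divide le_divide_eq divide_le_eq)
qed (simp_all add: power2_eq_square power4_eq_xxxx)

lemma largest_eig_U4_lt_U3_7_on_25_12_9_4:
  assumes "25/12 \<le> p" "p \<le> 9/4"
  shows "largest_eig (sombor_mat p 7 (U4_edge 7)) < largest_eig (sombor_mat p 7 (U3_edge 7))"
proof (rule largest_eig_U4_lt_U3_7_on_interval[OF _ assms,
      where \<mu> = "5891/500" and Y = "5891/500" and Z = "8863/1000"])
  show "sombor_weight (25/12) 1 1 \<le> 3487/2500"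
    by (rule sombor_weight_numeral_divide_le[where X = 1 and Y = 1])
      (simp_all add: power_divide le_divide_eq divide_le_eq)
  show "sombor_weight (25/12) 4 2 \<le> 22141/5000"
    by (rule sombor_weight_numeral_divide_le[where X = "897969639/50000000" and Y = "211892619/50000000"])
      (simp_all add: power_divide le_divide_eq divide_le_eq)
  show "sombor_weight (25/12) 4 1 \<le> 8211/2000"
    by (rule sombor_weight_numeral_divide_le[where X = "897969639/50000000" and Y = 1])
      (simp_all add: power_divide le_divide_eq divide_le_eq)
  show "13607/10000 \<le> sombor_weight (9/4) 1 1"
    by (rule sombor_weight_numeral_divide_ge[where X = 1 and Y = 1])
      (simp_all add: power_divide le_divide_eq divide_le_eq)
  show "52733/10000 \<le> sombor_weight (9/4) 5 2"
    by (rule sombor_weight_numeral_divide_ge[where X = "3738371953/100000000" and Y = "237841423/50000000"])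
      (simp_all add: power_divide le_divide_eq divide_le_eq)
  show "5059/1000 \<le> sombor_weight (9/4) 5 1"
    by (rule sombor_weight_numeral_divide_ge[where X = "3738371953/100000000" and Y = 1])
      (simp_all add: power_divide le_divide_eq divide_le_eq)
qed (simp_all add: power2_eq_square power4_eq_xxxx)

lemma largest_eig_U4_lt_U3_7_on_9_4_5_2:
  assumes "9/4 \<le> p" "p \<le> 5/2"
  shows "largest_eig (sombor_mat p 7 (U4_edge 7)) < largest_eig (sombor_mat p 7 (U3_edge 7))"
proof (rule largest_eig_U4_lt_U3_7_on_interval[OF _ assms,
      where \<mu> = "2907/250" and Y = "2907/250" and Z = "437/50"])
  show "sombor_weight (9/4) 1 1 \<le> 1701/1250"
    by (rule sombor_weight_numeral_divide_le[where X = 1 and Y = 1])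
      (simp_all add: power_divide le_divide_eq divide_le_eq)
  show "sombor_weight (9/4) 4 2 \<le> 43541/10000"
    by (rule sombor_weight_numeral_divide_le[where X = "22627417/1000000" and Y = "475682847/100000000"])
      (simp_all add: power_divide le_divide_eq divide_le_eq)
  show "sombor_weight (9/4) 4 1 \<le> 40777/10000"
    by (rule sombor_weight_numeral_divide_le[where X = "22627417/1000000" and Y = 1])
      (simp_all add: power_divide le_divide_eq divide_le_eq)
  show "2639/2000 \<le> sombor_weight (5/2) 1 1"
    by (rule sombor_weight_numeral_divide_ge[where X = 1 and Y = 1])
      (simp_all add: power_divide le_divide_eq divide_le_eq)
  show "10393/2000 \<le> sombor_weight (5/2) 5 2"
    by (rule sombor_weight_numeral_divide_ge[where X = "5590169943/100000000" and Y = "35355339/6250000"])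
      (simp_all add: power_divide le_divide_eq divide_le_eq)
  show "10071/2000 \<le> sombor_weight (5/2) 5 1"
    by (rule sombor_weight_numeral_divide_ge[where X = "5590169943/100000000" and Y = 1])
      (simp_all add: power_divide le_divide_eq divide_le_eq)
qed (simp_all add: power2_eq_square power4_eq_xxxx)

lemma largest_eig_U4_lt_U3_7_on_5_2_3:
  assumes "5/2 \<le> p" "p \<le> 3"
  shows "largest_eig (sombor_mat p 7 (U4_edge 7)) < largest_eig (sombor_mat p 7 (U3_edge 7))"
proof (rule largest_eig_U4_lt_U3_7_on_interval[OF _ assms,
      where \<mu> = "11451/1000" and Y = "11451/1000" and Z = "43/5"])
  show "sombor_weight (5/2) 1 1 \<le> 3299/2500"
    by (rule sombor_weight_numeral_divide_le[where X = 1 and Y = 1])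
      (simp_all add: power_divide le_divide_eq divide_le_eq)
  show "sombor_weight (5/2) 4 2 \<le> 10673/2500"
    by (rule sombor_weight_numeral_divide_le[where X = "32" and Y = "22627417/4000000"])
      (simp_all add: power_divide le_divide_eq divide_le_eq)
  show "sombor_weight (5/2) 4 1 \<le> 2531/625"
    by (rule sombor_weight_numeral_divide_le[where X = "32" and Y = 1])
      (simp_all add: power_divide le_divide_eq divide_le_eq)
  show "12599/10000 \<le> sombor_weight 3 1 1"
    by (rule sombor_weight_numeral_ge) (simp_all add: power_divide le_divide_eq divide_le_eq)
  show "12761/2500 \<le> sombor_weight 3 5 2"
    by (rule sombor_weight_numeral_ge) (simp_all add: power_divide le_divide_eq divide_le_eq)
  show "12533/2500 \<le> sombor_weight 3 5 1"
    by (rule sombor_weight_numeral_ge) (simp_all add: power_divide le_divide_eq divide_le_eq)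
qed (simp_all add: power2_eq_square power4_eq_xxxx)

lemma largest_eig_U4_lt_U3_7_ge_3:
  assumes p: "3 \<le> p"
  shows "largest_eig (sombor_mat p 7 (U4_edge 7)) < largest_eig (sombor_mat p 7 (U3_edge 7))"
proof (rule largest_eig_U4_lt_U3_7_on_interval[OF _ p order.refl,
      where \<mu> = "2801/250" and Y = "2801/250" and Z = "2103/250"])
  show "sombor_weight 3 1 1 \<le> 63/50"
    by (rule sombor_weight_numeral_le) (simp_all add: power_divide le_divide_eq divide_le_eq)
  show "sombor_weight 3 4 2 \<le> 20801/5000"
    by (rule sombor_weight_numeral_le) (simp_all add: power_divide le_divide_eq divide_le_eq)
  show "sombor_weight 3 4 1 \<le> 2513/625"
    by (rule sombor_weight_numeral_le) (simp_all add: power_divide le_divide_eq divide_le_eq)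
  show "1 \<le> sombor_weight p 1 1" "5 \<le> sombor_weight p 5 2" "5 \<le> sombor_weight p 5 1"
    using p by (auto intro: sombor_weight_ge_left)
qed (simp_all add: power2_eq_square power4_eq_xxxx)

lemma largest_eig_U4_lt_U3_7:
  assumes "2 \<le> p"
  shows "largest_eig (sombor_mat p 7 (U4_edge 7)) < largest_eig (sombor_mat p 7 (U3_edge 7))"
proof -
  consider "p \<le> 25/12" | "25/12 \<le> p" "p \<le> 9/4" | "9/4 \<le> p" "p \<le> 5/2" | "5/2 \<le> p" "p \<le> 3" | "3 \<le> p"
    by linarith
  then show ?thesis
    using assms largest_eig_U4_lt_U3_7_on_2_25_12 largest_eig_U4_lt_U3_7_on_25_12_9_4
      largest_eig_U4_lt_U3_7_on_9_4_5_2 largest_eig_U4_lt_U3_7_on_5_2_3 largest_eig_U4_lt_U3_7_ge_3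
    by cases blast+
qed

theorem lemma4p2:
  fixes n :: nat and p :: real
  assumes "n \<ge> 7" and "p \<ge> 2"
  shows "largest_eig (sombor_mat p n (U4_edge n)) < largest_eig (sombor_mat p n (U3_edge n))"
proof -
  consider "n = 7" | "n = 8" | "9 \<le> n"
    using assms(1) by linarith
  then show ?thesis
    using assms(2) largest_eig_U4_lt_U3_7 largest_eig_U4_lt_U3_8 largest_eig_U4_lt_U3_large
    by cases blast+
qed

end
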